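(* Let $\tau$ be a substitution satisfying the standing assumptions below such that $(X_\tau,\sigma)$ is quasi-invertible, and let $U\subset X_\tau$ be a clopen set containing the branch point. Let $h:U\to\{1,\ldots,H\}$ be the height function, $h(x)=\min\{k\ge1:\sigma^k(x)\in U\}$, and for $1\le k\le H$ and $0\le j\le k-1$ let $U_k^j=\sigma^j(h^{-1}(\{k\}))$. Then the sets $\{U_k^j:1\le k\le H,\ 0\le j\le k-1\}$ form a partition of $X_\tau$ into clopen sets.
   Context: Substitutions are extended to words and sequences by concatenation; $u$ is a fixed point of $\tau$, $\sigma$ the left shift, $X_\tau$ the closure of $\{\sigma^n(u):n\ge0\}$ in $\mathcal A^{\mathbb N}$. A branch point is a point of $X_\tau$ with more than one $\sigma$-preimage in $X_\tau$; quasi-invertible means $X_\tau$ has exactly one branch point. Standing assumptions: $\tau$ primitive (so $(X_\tau,\sigma)$ is minimal and $h$ is finite-valued and bounded), $X_\tau$ infinite, $\tau$ unilaterally recognizable, all powers of $\tau$ injective on letters. *)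

theory Defs
  imports "HOL-Analysis.Analysis"
begin

definition subst_word :: "('a \<Rightarrow> 'a list) \<Rightarrow> 'a list \<Rightarrow> 'a list" where
  "subst_word \<tau> w = concat (map \<tau> w)"

definition subst_pow :: "('a \<Rightarrow> 'a list) \<Rightarrow> nat \<Rightarrow> 'a \<Rightarrow> 'a list" where
  "subst_pow \<tau> n a = (subst_word \<tau> ^^ n) [a]"

text \<open>Extension of a non-erasing substitution to one-sided infinite sequences by concatenation:
  position i of tau(x) is read off from tau(x_0 ... x_i), which has length > i.\<close>
definition subst_seq :: "('a \<Rightarrow> 'a list) \<Rightarrow> (nat \<Rightarrow> 'a) \<Rightarrow> (nat \<Rightarrow> 'a)" where
  "subst_seq \<tau> x = (\<lambda>i. subst_word \<tau> (map x [0..<Suc i]) ! i)"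

definition nonerasing :: "('a \<Rightarrow> 'a list) \<Rightarrow> bool" where
  "nonerasing \<tau> \<longleftrightarrow> (\<forall>a. \<tau> a \<noteq> [])"

definition primitive :: "('a \<Rightarrow> 'a list) \<Rightarrow> bool" where
  "primitive \<tau> \<longleftrightarrow> (\<exists>n\<ge>1. \<forall>a b. b \<in> set (subst_pow \<tau> n a))"

definition shift :: "(nat \<Rightarrow> 'a) \<Rightarrow> (nat \<Rightarrow> 'a)" where
  "shift x = (\<lambda>i. x (Suc i))"

definition seq_topology :: "(nat \<Rightarrow> 'a) topology" where
  "seq_topology = product_topology (\<lambda>_. discrete_topology UNIV) UNIV"

definition subshift :: "(nat \<Rightarrow> 'a) \<Rightarrow> (nat \<Rightarrow> 'a) set" where
  "subshift u = seq_topology closure_of (range (\<lambda>n. (shift ^^ n) u))"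

definition branch_point :: "(nat \<Rightarrow> 'a) set \<Rightarrow> (nat \<Rightarrow> 'a) \<Rightarrow> bool" where
  "branch_point X y \<longleftrightarrow> y \<in> X \<and> (\<exists>x1\<in>X. \<exists>x2\<in>X. x1 \<noteq> x2 \<and> shift x1 = y \<and> shift x2 = y)"

definition quasi_invertible :: "(nat \<Rightarrow> 'a) set \<Rightarrow> bool" where
  "quasi_invertible X \<longleftrightarrow> (\<exists>!y. branch_point X y)"

definition unilaterally_recognizable :: "('a \<Rightarrow> 'a list) \<Rightarrow> (nat \<Rightarrow> 'a) set \<Rightarrow> bool" where
  "unilaterally_recognizable \<tau> X \<longleftrightarrow>
     (\<forall>x\<in>X. \<exists>!(k, y). y \<in> X \<and> k < length (\<tau> (y 0)) \<and> x = (shift ^^ k) (subst_seq \<tau> y))"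

definition clopen_in :: "(nat \<Rightarrow> 'a) set \<Rightarrow> (nat \<Rightarrow> 'a) set \<Rightarrow> bool" where
  "clopen_in X U \<longleftrightarrow> openin (subtopology seq_topology X) U \<and> closedin (subtopology seq_topology X) U"

definition height :: "(nat \<Rightarrow> 'a) set \<Rightarrow> (nat \<Rightarrow> 'a) \<Rightarrow> nat" where
  "height U x = (LEAST k. 1 \<le> k \<and> (shift ^^ k) x \<in> U)"

definition tower_level :: "(nat \<Rightarrow> 'a) set \<Rightarrow> nat \<Rightarrow> nat \<Rightarrow> (nat \<Rightarrow> 'a) set" where
  "tower_level U k j = (shift ^^ j) ` {x \<in> U. height U x = k}"

end

theory Submission
  imports Defs
begin

text \<open>Primitivity makes the fixed point \<open>u\<close> uniformly recurrent, so every orbit of \<open>X\<^sub>\<tau>\<close> meets every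
  nonempty relatively open set, the shift is onto \<open>X\<^sub>\<tau>\<close>, and by compactness return times to the clopen
  set \<open>U\<close> are bounded. A point outside \<open>U\<close> is not a branch point, so it has a unique preimage in
  \<open>X\<^sub>\<tau>\<close>; hence every point of \<open>X\<^sub>\<tau>\<close> can be walked back uniquely to its last visit of \<open>U\<close>, which makes
  the levels \<open>U\<^sub>k\<^sup>j\<close> a partition. The levels are continuous images of compact sets, hence closed, and a
  finite partition into closed sets consists of clopen sets.\<close>

definition cylinder :: "(nat \<Rightarrow> 'a) \<Rightarrow> nat \<Rightarrow> (nat \<Rightarrow> 'a) set" where
  "cylinder x n = {y. \<forall>i<n. y i = x i}"

lemma topspace_seq_topology [simp]: "topspace seq_topology = UNIV"
  by (simp add: seq_topology_def)

lemma openin_cylinder: "openin seq_topology (cylinder x n)"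
proof -
  have cyl: "cylinder x n = PiE UNIV (\<lambda>i. if i < n then {x i} else UNIV)"
    by (auto simp: cylinder_def PiE_def Pi_def extensional_def)
  have "{i. (if i < n then {x i} else UNIV) \<noteq> UNIV} \<subseteq> {..<n}"
    by (auto split: if_splits)
  then have "finite {i \<in> UNIV. (if i < n then {x i} else UNIV) \<noteq> topspace (discrete_topology UNIV)}"
    by (auto intro: finite_subset)
  then show ?thesis
    unfolding seq_topology_def cyl by (auto simp: openin_PiE_gen)
qed

lemma openin_seq_topology_cylinder:
  assumes "openin seq_topology V" "x \<in> V"
  shows "\<exists>n. cylinder x n \<subseteq> V"
proof -
  obtain W where W_fin: "finite {i. W i \<noteq> UNIV}"
    and W: "x \<in> Pi\<^sub>E UNIV W" "Pi\<^sub>E UNIV W \<subseteq> V"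
    using assms unfolding seq_topology_def openin_product_topology_alt by auto
  obtain n where n: "{i. W i \<noteq> UNIV} \<subseteq> {..<n}"
    using W_fin finite_nat_bounded by blast
  have "cylinder x n \<subseteq> Pi\<^sub>E UNIV W"
  proof
    fix y assume y: "y \<in> cylinder x n"
    have "y i \<in> W i" for i
    proof (cases "W i = UNIV")
      case False
      then have "y i = x i" using n y by (auto simp: cylinder_def)
      then show ?thesis using W(1) by (simp add: PiE_iff)
    qed simp
    then show "y \<in> Pi\<^sub>E UNIV W" by (simp add: PiE_iff)
  qed
  then show ?thesis using W(2) by blast
qed

lemma shift_pow_apply: "(shift ^^ k) x i = x (k + i)"
  by (induction k arbitrary: x i) (auto simp: shift_def)

lemma shift_pow_shift_pow: "(shift ^^ a) ((shift ^^ b) x) = (shift ^^ (a + b)) x"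
  by (simp add: funpow_add)

lemma continuous_map_shift_pow: "continuous_map seq_topology seq_topology (shift ^^ k)"
  unfolding seq_topology_def continuous_map_componentwise_UNIV shift_pow_apply
  by (auto intro: continuous_map_product_projection)

lemma compact_space_seq_topology: "compact_space (seq_topology :: (nat \<Rightarrow> 'a::finite) topology)"
  unfolding seq_topology_def
  by (simp add: compact_space_product_topology compact_space_discrete_topology)

lemma Hausdorff_space_seq_topology: "Hausdorff_space seq_topology"
  unfolding seq_topology_def by (simp add: Hausdorff_space_product_topology)

lemma closedin_shift_pow_preimage:
  "closedin seq_topology C \<Longrightarrow> closedin seq_topology {x. (shift ^^ i) x \<in> C}"
  using closedin_continuous_map_preimage[OF continuous_map_shift_pow] by fastforce

lemma closedin_shift_pow_image:
  fixes A :: "(nat \<Rightarrow> 'a::finite) set"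
  assumes "closedin seq_topology A"
  shows "closedin seq_topology ((shift ^^ j) ` A)"
  using closedin_compact_space[OF compact_space_seq_topology assms]
  by (intro compactin_imp_closedin[OF Hausdorff_space_seq_topology] image_compactin[OF _ continuous_map_shift_pow])

lemma compactin_bounded_hitting_time:
  assumes K: "compactin seq_topology K" and W: "openin seq_topology W"
    and hits: "\<forall>x\<in>K. \<exists>i. P i \<and> (shift ^^ i) x \<in> W"
  shows "\<exists>B. \<forall>x\<in>K. \<exists>i\<le>B. P i \<and> (shift ^^ i) x \<in> W"
proof -
  define f where "f i = {x. (shift ^^ i) x \<in> W}" for i
  have "openin seq_topology (f i)" for i
    using openin_continuous_map_preimage[OF continuous_map_shift_pow W] by (simp add: f_def)
  moreover have "K \<subseteq> \<Union> (f ` {i. P i})" using hits unfolding f_def by blast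
  ultimately obtain F where F: "finite F" "F \<subseteq> f ` {i. P i}" "K \<subseteq> \<Union>F"
    using K unfolding compactin_def by (metis (no_types, lifting) imageE)
  then obtain C where C: "C \<subseteq> {i. P i}" "finite C" "F = f ` C"
    by (meson finite_subset_image)
  have "\<exists>i\<le>Max C. P i \<and> (shift ^^ i) x \<in> W" if x: "x \<in> K" for x
  proof -
    obtain i where "i \<in> C" "x \<in> f i" using x F(3) C(3) by blast
    then show ?thesis using C(1,2) unfolding f_def by (auto intro!: exI[of _ i])
  qed
  then show ?thesis by blast
qed

lemma openin_finite_closed_partition:
  assumes "finite I" and "i \<in> I" and "X \<subseteq> topspace T" and "A i \<subseteq> X"
    and cover: "X \<subseteq> (\<Union>i\<in>I. A i)"
    and disjoint: "\<And>i j. i \<in> I \<Longrightarrow> j \<in> I \<Longrightarrow> i \<noteq> j \<Longrightarrow> A i \<inter> A j = {}"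
    and closed: "\<And>i. i \<in> I \<Longrightarrow> closedin T (A i)"
  shows "openin (subtopology T X) (A i)"
proof -
  have "A i = X - (\<Union>j\<in>I - {i}. A j)"
    using cover disjoint \<open>i \<in> I\<close> \<open>A i \<subseteq> X\<close> by blast
  moreover have "closedin T (\<Union>j\<in>I - {i}. A j)"
    using \<open>finite I\<close> closed by (intro closedin_Union) auto
  ultimately show ?thesis
    using openin_subtopology_diff_closed \<open>X \<subseteq> topspace T\<close> by metis
qed

lemma subst_word_append: "subst_word \<tau> (xs @ ys) = subst_word \<tau> xs @ subst_word \<tau> ys"
  by (simp add: subst_word_def)

lemma subst_word_pow_append:
  "(subst_word \<tau> ^^ m) (xs @ ys) = (subst_word \<tau> ^^ m) xs @ (subst_word \<tau> ^^ m) ys"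
  by (induction m) (auto simp: subst_word_append)

lemma length_subst_word_ge: "nonerasing \<tau> \<Longrightarrow> length xs \<le> length (subst_word \<tau> xs)"
proof (induction xs)
  case (Cons a xs)
  then have "1 \<le> length (\<tau> a)" by (cases "\<tau> a") (auto simp: nonerasing_def)
  then show ?case using Cons by (simp add: subst_word_def)
qed (simp add: subst_word_def)

lemma length_subst_word_pow_ge: "nonerasing \<tau> \<Longrightarrow> length xs \<le> length ((subst_word \<tau> ^^ m) xs)"
  by (induction m) (auto intro: order_trans[OF _ length_subst_word_ge])

lemma length_subst_word_pow_ge_exp:
  assumes "\<forall>a. 2 \<le> length ((subst_word \<tau> ^^ n) [a])"
  shows "2 ^ m * length xs \<le> length ((subst_word \<tau> ^^ (n * m)) xs)"
proof -
  have double: "2 * length ys \<le> length ((subst_word \<tau> ^^ n) ys)" for ys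
  proof (induction ys)
    case (Cons a ys)
    have "length ((subst_word \<tau> ^^ n) (a # ys))
        = length ((subst_word \<tau> ^^ n) [a]) + length ((subst_word \<tau> ^^ n) ys)"
      using subst_word_pow_append[where xs = "[a]"] by (metis append_Cons append_Nil length_append)
    then show ?case using assms Cons.IH by (metis add_mono length_Cons mult_Suc_right)
  qed simp
  show ?thesis
  proof (induction m)
    case (Suc m)
    then show ?case
      using double[of "(subst_word \<tau> ^^ (n * m)) xs"] by (simp add: funpow_add)
  qed simp
qed

lemma subst_word_upt_split:
  assumes "a \<le> b"
  shows "subst_word \<tau> (map u [0..<b]) = subst_word \<tau> (map u [0..<a]) @ subst_word \<tau> (map u [a..<b])"
proof -
  have "[0..<b] = [0..<a] @ [a..<b]"
    using upt_add_eq_append[of 0 a "b - a"] assms by simp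
  then show ?thesis by (simp add: subst_word_append)
qed

text \<open>Position \<open>i\<close> of a fixed point is read off from the image of any prefix of \<open>u\<close> longer than \<open>i\<close>,
  since images of prefixes are prefixes of each other.\<close>
lemma fixpoint_prefix:
  assumes ne: "nonerasing \<tau>" and fp: "subst_seq \<tau> u = u"
  shows "map u [0..<length (subst_word \<tau> (map u [0..<k]))] = subst_word \<tau> (map u [0..<k])"
proof (rule nth_equalityI)
  fix i assume "i < length (map u [0..<length (subst_word \<tau> (map u [0..<k]))])"
  then have i: "i < length (subst_word \<tau> (map u [0..<k]))" by simp
  have li: "Suc i \<le> length (subst_word \<tau> (map u [0..<Suc i]))"
    using length_subst_word_ge[OF ne, of "map u [0..<Suc i]"] by simp
  have "map u [0..<length (subst_word \<tau> (map u [0..<k]))] ! i = u i"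
    using i by simp
  also have "\<dots> = subst_word \<tau> (map u [0..<Suc i]) ! i"
    using fun_cong[OF fp, of i] by (simp only: subst_seq_def)
  also have "\<dots> = subst_word \<tau> (map u [0..<k]) ! i"
  proof (cases "Suc i \<le> k")
    case True
    have "i < length (subst_word \<tau> (map u [0..<Suc i]))" using li by simp
    then show ?thesis
      using subst_word_upt_split[OF True, of \<tau> u] by (metis nth_append_left)
  next
    case False
    then have "k \<le> Suc i" by simp
    then show ?thesis
      using subst_word_upt_split[of k "Suc i" \<tau> u] i by (metis nth_append_left)
  qed
  finally show "map u [0..<length (subst_word \<tau> (map u [0..<k]))] ! i = subst_word \<tau> (map u [0..<k]) ! i" .
qed simp

lemma fixpoint_prefix_pow:
  assumes "nonerasing \<tau>" and "subst_seq \<tau> u = u"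
  shows "map u [0..<length ((subst_word \<tau> ^^ m) (map u [0..<k]))] = (subst_word \<tau> ^^ m) (map u [0..<k])"
proof (induction m)
  case (Suc m)
  then show ?case
    using fixpoint_prefix[OF assms, of "length ((subst_word \<tau> ^^ m) (map u [0..<k]))"] by simp
qed simp

definition uniformly_recurrent :: "(nat \<Rightarrow> 'a) \<Rightarrow> bool" where
  "uniformly_recurrent u \<longleftrightarrow> (\<forall>N. \<exists>K. \<forall>m. \<exists>p. m \<le> p \<and> p \<le> m + K \<and> (\<forall>i<N. u (p + i) = u i))"

text \<open>In the next two lemmas \<open>T\<close> plays the role of a power of a substitution fixing \<open>u\<close>, so that
  \<open>u\<close> is the concatenation of the blocks \<open>T [u k]\<close>.\<close>
lemma occurs_in_block:
  assumes T_append: "\<And>xs ys. T (xs @ ys) = T xs @ T ys"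
    and T_fix: "\<And>k. map u [0..<length (T (map u [0..<k]))] = T (map u [0..<k])"
    and block: "T [u k] = A @ P @ B" and "i < length P"
  shows "u (length (T (map u [0..<k])) + length A + i) = P ! i"
proof -
  let ?p = "length (T (map u [0..<k])) + length A"
  have T_Suc: "T (map u [0..<Suc k]) = T (map u [0..<k]) @ A @ P @ B"
    using T_append[of "map u [0..<k]" "[u k]"] block by simp
  have "?p + i < length (T (map u [0..<Suc k]))" using T_Suc \<open>i < length P\<close> by simp
  then have "u (?p + i) = map u [0..<length (T (map u [0..<Suc k]))] ! (?p + i)" by simp
  also have "\<dots> = T (map u [0..<Suc k]) ! (?p + i)"
    by (simp only: T_fix)
  also have "\<dots> = (T (map u [0..<k]) @ A @ P @ B) ! (?p + i)"
    by (simp only: T_Suc)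
  also have "\<dots> = P ! i"
    using \<open>i < length P\<close> by (simp add: nth_append)
  finally show ?thesis .
qed

lemma occurs_with_bounded_gaps:
  fixes T :: "'a::finite list \<Rightarrow> 'a list" and u :: "nat \<Rightarrow> 'a"
  assumes T_append: "\<And>xs ys. T (xs @ ys) = T xs @ T ys"
    and T_long: "\<And>k. k \<le> length (T (map u [0..<k]))"
    and T_fix: "\<And>k. map u [0..<length (T (map u [0..<k]))] = T (map u [0..<k])"
    and T_contains: "\<And>b. \<exists>A B. T [b] = A @ P @ B"
  shows "\<exists>K. \<forall>m. \<exists>p. m \<le> p \<and> p \<le> m + K \<and> (\<forall>i<length P. u (p + i) = P ! i)"
proof -
  define K where "K = Max (range (\<lambda>b. length (T [b])))"
  have K: "length (T [b]) \<le> K" for b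
    unfolding K_def by (rule Max_ge) auto
  define g where "g k = length (T (map u [0..<k]))" for k
  have g_Suc: "g (Suc k) = g k + length (T [u k])" for k
    using T_append[of "map u [0..<k]" "[u k]"] by (simp add: g_def)
  have "\<exists>p. m \<le> p \<and> p \<le> m + (K + K) \<and> (\<forall>i<length P. u (p + i) = P ! i)" for m
  proof -
    define k0 where "k0 = (LEAST k. m \<le> g k)"
    have m_le: "m \<le> g k0"
      unfolding k0_def by (rule LeastI[of _ m]) (simp add: g_def T_long)
    have le_m: "g k0 \<le> m + K"
    proof (cases k0)
      case 0
      have "T [] = []" using T_append[of "[]" "[]"] by simp
      then show ?thesis using 0 by (simp add: g_def)
    next
      case (Suc k)
      then have "\<not> m \<le> g k"
        unfolding k0_def by (metis lessI not_less_Least)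
      then show ?thesis using g_Suc[of k] K[of "u k"] Suc by simp
    qed
    obtain A B where AB: "T [u k0] = A @ P @ B" using T_contains by blast
    then have "length A \<le> K" using K[of "u k0"] by simp
    then show ?thesis
      using m_le le_m occurs_in_block[OF T_append T_fix AB]
      by (intro exI[of _ "g k0 + length A"]) (auto simp: g_def)
  qed
  then show ?thesis by blast
qed

lemma length_ge_2_if_all_letters:
  fixes w :: "'a list" and c c' :: 'a
  assumes "\<forall>b. b \<in> set w" and "c \<noteq> c'"
  shows "2 \<le> length w"
proof -
  have "2 = card {c, c'}" using \<open>c \<noteq> c'\<close> by simp
  also have "\<dots> \<le> card (set w)" by (rule card_mono) (use assms(1) in auto)
  also have "\<dots> \<le> length w" by (rule card_length)
  finally show ?thesis .
qed

lemma subst_word_pow_image_contains: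
  assumes "u 0 \<in> set ((subst_word \<tau> ^^ n) [b])"
  shows "\<exists>A B. (subst_word \<tau> ^^ (m + n)) [b] = A @ (subst_word \<tau> ^^ m) [u 0] @ B"
proof -
  obtain xs ys where "(subst_word \<tau> ^^ n) [b] = xs @ [u 0] @ ys"
    using assms split_list[of "u 0"] by fastforce
  then have "(subst_word \<tau> ^^ (m + n)) [b] = (subst_word \<tau> ^^ m) (xs @ [u 0] @ ys)"
    by (simp add: funpow_add)
  then show ?thesis by (simp only: subst_word_pow_append) blast
qed

text \<open>The prefix \<open>P\<close> of \<open>u\<close> below is the image of \<open>u 0\<close> under a high power of \<open>\<tau>\<close>, so it occurs in
  the image of every letter under a slightly higher power.\<close>
lemma primitive_fixpoint_uniformly_recurrent:
  fixes \<tau> :: "'a::finite \<Rightarrow> 'a list" and c c' :: 'a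
  assumes ne: "nonerasing \<tau>" and fp: "subst_seq \<tau> u = u" and "primitive \<tau>" and "c \<noteq> c'"
  shows "uniformly_recurrent u"
  unfolding uniformly_recurrent_def
proof
  fix N
  obtain n where all: "\<forall>a b. b \<in> set ((subst_word \<tau> ^^ n) [a])"
    using \<open>primitive \<tau>\<close> by (auto simp: primitive_def subst_pow_def)
  define P where "P = (subst_word \<tau> ^^ (n * N)) [u 0]"
  have "\<forall>a. 2 \<le> length ((subst_word \<tau> ^^ n) [a])"
    using length_ge_2_if_all_letters[OF _ \<open>c \<noteq> c'\<close>] all by blast
  from length_subst_word_pow_ge_exp[OF this, of N "[u 0]"]
  have "2 ^ N \<le> length P" by (simp add: P_def)
  with less_exp[of N] have N_le: "N \<le> length P" by linarith
  have "map u [0..<length P] = P"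
    using fixpoint_prefix_pow[OF ne fp, of "n * N" 1] by (simp add: P_def)
  then have P_nth: "P ! i = u i" if "i < length P" for i
    using that by (metis diff_zero nth_map_upt add_0)
  have "\<exists>K. \<forall>m. \<exists>p. m \<le> p \<and> p \<le> m + K \<and> (\<forall>i<length P. u (p + i) = P ! i)"
  proof (rule occurs_with_bounded_gaps)
    show "(subst_word \<tau> ^^ (n * N + n)) (xs @ ys)
        = (subst_word \<tau> ^^ (n * N + n)) xs @ (subst_word \<tau> ^^ (n * N + n)) ys" for xs ys
      by (rule subst_word_pow_append)
    show "k \<le> length ((subst_word \<tau> ^^ (n * N + n)) (map u [0..<k]))" for k
      using length_subst_word_pow_ge[OF ne, of "map u [0..<k]"] by simp
    show "\<exists>A B. (subst_word \<tau> ^^ (n * N + n)) [b] = A @ P @ B" for b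
      unfolding P_def using all by (intro subst_word_pow_image_contains) blast
  qed (rule fixpoint_prefix_pow[OF ne fp])
  then obtain K where K: "\<forall>m. \<exists>p. m \<le> p \<and> p \<le> m + K \<and> (\<forall>i<length P. u (p + i) = P ! i)"
    by blast
  show "\<exists>K. \<forall>m. \<exists>p. m \<le> p \<and> p \<le> m + K \<and> (\<forall>i<N. u (p + i) = u i)"
  proof (rule exI[of _ K], intro allI)
    fix m
    obtain p where "m \<le> p" "p \<le> m + K" "\<forall>i<length P. u (p + i) = P ! i" using K by blast
    then show "\<exists>p. m \<le> p \<and> p \<le> m + K \<and> (\<forall>i<N. u (p + i) = u i)"
      using N_le P_nth by (intro exI[of _ p]) auto
  qed
qed

lemma closedin_subshift: "closedin seq_topology (subshift u)"
  by (simp add: subshift_def)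

lemma compactin_subshift: "compactin seq_topology (subshift (u :: nat \<Rightarrow> 'a::finite))"
  by (rule closedin_compact_space[OF compact_space_seq_topology closedin_subshift])

lemma orbit_in_subshift: "(shift ^^ n) u \<in> subshift u"
  unfolding subshift_def by (rule subsetD[OF closure_of_subset]) auto

lemma shift_pow_in_subshift:
  assumes "x \<in> subshift u"
  shows "(shift ^^ k) x \<in> subshift u"
proof -
  have "(shift ^^ k) ` subshift u \<subseteq> seq_topology closure_of ((shift ^^ k) ` range (\<lambda>n. (shift ^^ n) u))"
    unfolding subshift_def by (rule continuous_map_image_closure_subset[OF continuous_map_shift_pow])
  also have "\<dots> \<subseteq> subshift u"
    unfolding subshift_def by (rule closure_of_mono) (auto simp: shift_pow_shift_pow)
  finally show ?thesis using assms by blast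
qed

lemma shift_in_subshift: "x \<in> subshift u \<Longrightarrow> shift x \<in> subshift u"
  using shift_pow_in_subshift[of x u 1] by simp

lemma subshift_cylinder_meets_orbit:
  assumes "z \<in> subshift u"
  shows "\<exists>q. (shift ^^ q) u \<in> cylinder z n"
proof -
  have "z \<in> cylinder z n" by (simp add: cylinder_def)
  then show ?thesis
    using assms openin_cylinder[of z n] unfolding subshift_def in_closure_of by blast
qed

text \<open>Minimality: the first \<open>q + n\<close> letters of \<open>u\<close> recur with bounded gaps, and \<open>x\<close> agrees with a
  long enough stretch of \<open>u\<close> to contain one recurrence, at which \<open>x\<close> enters the cylinder of \<open>z\<close>.\<close>
lemma uniformly_recurrent_orbit_enters:
  assumes UR: "uniformly_recurrent u" and x: "x \<in> subshift u"
    and V: "openin (subtopology seq_topology (subshift u)) V" and z: "z \<in> V"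
  shows "\<exists>k. (shift ^^ k) x \<in> V"
proof -
  obtain W where W: "openin seq_topology W" "V = W \<inter> subshift u"
    using V unfolding openin_subtopology by blast
  obtain n where n: "cylinder z n \<subseteq> W"
    using openin_seq_topology_cylinder[OF W(1)] z W(2) by blast
  obtain q where q: "(shift ^^ q) u \<in> cylinder z n"
    using subshift_cylinder_meets_orbit z W(2) by blast
  obtain K where K: "\<forall>m. \<exists>p. m \<le> p \<and> p \<le> m + K \<and> (\<forall>i<q + n. u (p + i) = u i)"
    using UR unfolding uniformly_recurrent_def by blast
  obtain m where m: "(shift ^^ m) u \<in> cylinder x (K + (q + n))"
    using subshift_cylinder_meets_orbit[OF x] by blast
  obtain p where p: "m \<le> p" "p \<le> m + K" "\<forall>i<q + n. u (p + i) = u i"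
    using K by blast
  define k where "k = p - m + q"
  have "(shift ^^ k) x \<in> cylinder z n"
    unfolding cylinder_def
  proof (intro CollectI allI impI)
    fix i assume i: "i < n"
    have "x (k + i) = u (m + (k + i))"
      using m i p(2) by (simp add: cylinder_def shift_pow_apply k_def)
    also have "m + (k + i) = p + (q + i)" using p(1) by (simp add: k_def)
    also have "u (p + (q + i)) = u (q + i)" using p(3) i by simp
    also have "u (q + i) = z i" using q i by (simp add: cylinder_def shift_pow_apply)
    finally show "(shift ^^ k) x i = z i" by (simp add: shift_pow_apply)
  qed
  then show ?thesis using n W(2) shift_pow_in_subshift[OF x] by blast
qed

text \<open>\<open>u\<close> lies in the closed set \<open>shift ` X\<close> because, by minimality, the orbit of \<open>shift u\<close> returns
  to every neighbourhood of \<open>u\<close>.\<close>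
lemma uniformly_recurrent_subshift_subset_shift_image:
  fixes u :: "nat \<Rightarrow> 'a::finite"
  assumes UR: "uniformly_recurrent u"
  shows "subshift u \<subseteq> shift ` subshift u"
proof -
  have closed: "closedin seq_topology (shift ` subshift u)"
    using closedin_shift_pow_image[OF closedin_subshift, of 1 u] by simp
  have "u \<in> seq_topology closure_of (range (\<lambda>k. (shift ^^ Suc k) u))"
    unfolding in_closure_of
  proof (intro conjI allI impI)
    fix T assume T: "u \<in> T \<and> openin seq_topology T"
    then obtain m where m: "cylinder u m \<subseteq> T"
      using openin_seq_topology_cylinder by blast
    have "openin (subtopology seq_topology (subshift u)) (cylinder u m \<inter> subshift u)"
      unfolding openin_subtopology using openin_cylinder by blast
    moreover have "u \<in> cylinder u m \<inter> subshift u"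
      using orbit_in_subshift[of 0 u] by (simp add: cylinder_def)
    ultimately obtain k where "(shift ^^ k) (shift u) \<in> cylinder u m"
      using uniformly_recurrent_orbit_enters[OF UR shift_in_subshift[OF orbit_in_subshift[of 0]]]
      by fastforce
    then have "(shift ^^ Suc k) u \<in> T" using m by (auto simp only: funpow_Suc_right comp_apply)
    then show "\<exists>y. y \<in> range (\<lambda>k. (shift ^^ Suc k) u) \<and> y \<in> T" by blast
  qed simp
  moreover have orbit_Suc: "(shift ^^ Suc k) u \<in> shift ` subshift u" for k
    using orbit_in_subshift[of k u] by simp
  then have "range (\<lambda>k. (shift ^^ Suc k) u) \<subseteq> shift ` subshift u" by blast
  ultimately have "u \<in> shift ` subshift u"
    using closure_of_minimal[OF _ closed] by blast
  with orbit_Suc have "(shift ^^ k) u \<in> shift ` subshift u" for k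
    by (cases k) simp_all
  then have "range (\<lambda>n. (shift ^^ n) u) \<subseteq> shift ` subshift u"
    by blast
  then show ?thesis
    using closure_of_minimal[OF _ closed] unfolding subshift_def by blast
qed

lemma shift_pow_preimage:
  assumes surj: "X \<subseteq> shift ` X" and "y \<in> X"
  shows "\<exists>w\<in>X. (shift ^^ N) w = y"
  using \<open>y \<in> X\<close>
proof (induction N arbitrary: y)
  case (Suc N)
  then obtain w where w: "w \<in> X" "(shift ^^ N) w = y" by blast
  moreover obtain v where "v \<in> X" "shift v = w" using surj w(1) by blast
  ultimately have "(shift ^^ Suc N) v = y" by (simp only: funpow_Suc_right comp_apply)
  then show ?case using \<open>v \<in> X\<close> by blast
qed auto

lemma height_le: "1 \<le> i \<Longrightarrow> (shift ^^ i) x \<in> U \<Longrightarrow> height U x \<le> i"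
  unfolding height_def by (rule Least_le) simp

lemma height_returns:
  assumes "\<exists>k. 1 \<le> k \<and> (shift ^^ k) x \<in> U"
  shows "1 \<le> height U x" and "(shift ^^ height U x) x \<in> U"
  using LeastI_ex[OF assms] unfolding height_def by auto

lemma shift_pow_notin_below_height: "1 \<le> i \<Longrightarrow> i < height U x \<Longrightarrow> (shift ^^ i) x \<notin> U"
  using height_le by fastforce

text \<open>Below their heights the two orbits stay outside \<open>U\<close>, where preimages are unique, so the
  coincidence of \<open>(shift ^^ j) x\<close> and \<open>(shift ^^ j') x'\<close> propagates back to \<open>x = (shift ^^ (j' - j)) x'\<close>.\<close>
lemma tower_walk_back:
  assumes branch: "\<forall>y. branch_point X y \<longrightarrow> y \<in> U" and "U \<subseteq> X"
    and shift_X: "\<And>y. y \<in> X \<Longrightarrow> shift y \<in> X"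
    and x: "x \<in> U" and x': "x' \<in> U" and eq: "(shift ^^ j) x = (shift ^^ j') x'"
    and hj: "j < height U x" and hj': "j' < height U x'" and "j \<le> j'"
  shows "j = j' \<and> x = x'"
proof -
  have orbit_X: "(shift ^^ n) y \<in> X" if "y \<in> X" for n y
    using that shift_X by (induction n) auto
  have walk: "(shift ^^ (j - i)) x = (shift ^^ (j' - i)) x'" if "i \<le> j" for i
    using that
  proof (induction i)
    case (Suc i)
    define a where "a = (shift ^^ (j - Suc i)) x"
    define a' where "a' = (shift ^^ (j' - Suc i)) x'"
    have "j - i = Suc (j - Suc i)" "j' - i = Suc (j' - Suc i)"
      using Suc.prems \<open>j \<le> j'\<close> by simp_all
    then have sa: "shift a = (shift ^^ (j - i)) x" and sa': "shift a' = (shift ^^ (j' - i)) x'"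
      by (simp_all add: a_def a'_def)
    have "shift a \<notin> U"
      unfolding sa using Suc.prems hj by (intro shift_pow_notin_below_height) simp_all
    moreover have "a \<in> X" "a' \<in> X" "shift a \<in> X"
      using x x' \<open>U \<subseteq> X\<close> orbit_X shift_X by (auto simp: a_def a'_def)
    moreover have "shift a = shift a'" using sa sa' Suc by simp
    ultimately have "a = a'" using branch unfolding branch_point_def by metis
    then show ?case unfolding a_def a'_def .
  qed (simp add: eq)
  have "x = (shift ^^ (j' - j)) x'" using walk[of j] by simp
  moreover have "j' - j \<ge> 1 \<Longrightarrow> (shift ^^ (j' - j)) x' \<notin> U"
    using hj' by (intro shift_pow_notin_below_height) simp_all
  ultimately show ?thesis using x \<open>j \<le> j'\<close> by (cases "j = j'") simp_all
qed

lemma tower_levels_disjoint: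
  assumes branch: "\<forall>y. branch_point X y \<longrightarrow> y \<in> U" and "U \<subseteq> X"
    and shift_X: "\<And>y. y \<in> X \<Longrightarrow> shift y \<in> X"
    and "j < k" "j' < k'" "(k, j) \<noteq> (k', j')"
  shows "tower_level U k j \<inter> tower_level U k' j' = {}"
proof (rule ccontr)
  assume "tower_level U k j \<inter> tower_level U k' j' \<noteq> {}"
  then obtain x x' where x: "x \<in> U" "height U x = k" and x': "x' \<in> U" "height U x' = k'"
    and eq: "(shift ^^ j) x = (shift ^^ j') x'"
    unfolding tower_level_def by auto
  have "j = j' \<and> x = x'"
  proof (cases "j \<le> j'")
    case True
    show ?thesis
      using tower_walk_back[OF branch \<open>U \<subseteq> X\<close> shift_X x(1) x'(1) eq] True assms x x' by simp
  next
    case False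
    show ?thesis
      using tower_walk_back[OF branch \<open>U \<subseteq> X\<close> shift_X x'(1) x(1) eq[symmetric]] False assms x x'
      by simp
  qed
  then show False using x x' assms by simp
qed

lemma infinite_subshift_two_letters:
  assumes "infinite (subshift (u :: nat \<Rightarrow> 'a))"
  shows "\<exists>c c' :: 'a. c \<noteq> c'"
proof (rule ccontr)
  assume "\<nexists>c c' :: 'a. c \<noteq> c'"
  then have "x = u" for x :: "nat \<Rightarrow> 'a" by (intro ext) blast
  then have "subshift u \<subseteq> {u}" by blast
  then show False using assms finite_subset by blast
qed

locale clopen_section_of_minimal_subshift =
  fixes u :: "nat \<Rightarrow> 'a::finite" and U :: "(nat \<Rightarrow> 'a) set"
  assumes recurrent: "uniformly_recurrent u"
    and U_sub: "U \<subseteq> subshift u"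
    and U_clopen: "clopen_in (subshift u) U"
    and U_nonempty: "U \<noteq> {}"
begin

lemma U_openin: "openin (subtopology seq_topology (subshift u)) U"
  using U_clopen by (simp add: clopen_in_def)

lemma closedin_U: "closedin seq_topology U"
  using U_clopen closedin_subshift closedin_trans_full by (auto simp: clopen_in_def)

lemma closedin_subshift_diff_U: "closedin seq_topology (subshift u - U)"
proof -
  obtain W where "openin seq_topology W" "U = W \<inter> subshift u"
    using U_openin unfolding openin_subtopology by blast
  then have "subshift u - U = subshift u - W" by blast
  with closedin_diff[OF closedin_subshift \<open>openin seq_topology W\<close>] show ?thesis by (simp only:)
qed

lemma enters_U: "x \<in> subshift u \<Longrightarrow> \<exists>k. (shift ^^ k) x \<in> U"
  using U_nonempty uniformly_recurrent_orbit_enters[OF recurrent _ U_openin] by (meson ex_in_conv)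

lemma returns_to_U:
  assumes "x \<in> U"
  shows "\<exists>k. 1 \<le> k \<and> (shift ^^ k) x \<in> U"
proof -
  have "shift x \<in> subshift u" using assms U_sub shift_in_subshift by blast
  then obtain k where "(shift ^^ k) (shift x) \<in> U" using enters_U by blast
  then have "(shift ^^ Suc k) x \<in> U" by (simp only: funpow_Suc_right comp_apply)
  then show ?thesis by (intro exI[of _ "Suc k"]) simp
qed

lemma finite_heights: "finite (height U ` U)"
proof -
  obtain W where W: "openin seq_topology W" "U = W \<inter> subshift u"
    using U_openin unfolding openin_subtopology by blast
  have hits: "\<forall>x\<in>U. \<exists>i. 1 \<le> i \<and> (shift ^^ i) x \<in> W"
    using returns_to_U W(2) by fast
  obtain B where B: "\<forall>x\<in>U. \<exists>i\<le>B. 1 \<le> i \<and> (shift ^^ i) x \<in> W"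
    using compactin_bounded_hitting_time[OF closedin_compact_space[OF compact_space_seq_topology closedin_U] W(1) hits]
    by blast
  have "height U x \<le> B" if x: "x \<in> U" for x
  proof -
    obtain i where i: "i \<le> B" "1 \<le> i" "(shift ^^ i) x \<in> W" using B x by blast
    have "(shift ^^ i) x \<in> subshift u" using x U_sub shift_pow_in_subshift by blast
    with i(3) W(2) have "(shift ^^ i) x \<in> U" by blast
    with i(1,2) show ?thesis using height_le[of i x U] by linarith
  qed
  then have "height U ` U \<subseteq> {..B}" by auto
  then show ?thesis using finite_subset by blast
qed

text \<open>By compactness every point enters \<open>U\<close> within a uniform time \<open>B\<close>; applied to a \<open>B\<close>-th
  preimage of \<open>y\<close>, this puts \<open>y\<close> in the forward orbit of \<open>U\<close>.\<close>
lemma in_orbit_of_U: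
  assumes y: "y \<in> subshift u"
  shows "\<exists>x\<in>U. \<exists>j. (shift ^^ j) x = y"
proof -
  obtain W where W: "openin seq_topology W" "U = W \<inter> subshift u"
    using U_openin unfolding openin_subtopology by blast
  have hits: "\<forall>w\<in>subshift u. \<exists>i. True \<and> (shift ^^ i) w \<in> W"
    using enters_U W(2) by fast
  obtain B where "\<forall>w\<in>subshift u. \<exists>i\<le>B. True \<and> (shift ^^ i) w \<in> W"
    using compactin_bounded_hitting_time[OF compactin_subshift W(1) hits] by blast
  then have B: "\<forall>w\<in>subshift u. \<exists>i\<le>B. (shift ^^ i) w \<in> W" by simp
  obtain w where w: "w \<in> subshift u" "(shift ^^ B) w = y"
    using shift_pow_preimage[OF uniformly_recurrent_subshift_subset_shift_image[OF recurrent] y] by blast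
  obtain i where i: "i \<le> B" "(shift ^^ i) w \<in> W" using B w(1) by blast
  have "(shift ^^ i) w \<in> U" using i(2) W(2) shift_pow_in_subshift w(1) by blast
  moreover have "(shift ^^ (B - i)) ((shift ^^ i) w) = y"
    using i(1) w(2) by (simp add: shift_pow_shift_pow)
  ultimately show ?thesis by blast
qed

lemma tower_levels_cover:
  assumes y: "y \<in> subshift u"
  shows "\<exists>x\<in>U. \<exists>j<height U x. y \<in> tower_level U (height U x) j"
proof -
  define j where "j = (LEAST j. \<exists>x\<in>U. (shift ^^ j) x = y)"
  have "\<exists>j. \<exists>x\<in>U. (shift ^^ j) x = y" using in_orbit_of_U[OF y] by blast
  then have "\<exists>x\<in>U. (shift ^^ j) x = y" unfolding j_def by (rule LeastI_ex)
  then obtain x where x: "x \<in> U" "(shift ^^ j) x = y" by blast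
  have "j < height U x"
  proof (rule ccontr)
    assume "\<not> j < height U x"
    then have "(shift ^^ (j - height U x)) ((shift ^^ height U x) x) = y"
      using x(2) by (simp add: shift_pow_shift_pow)
    moreover have "(shift ^^ height U x) x \<in> U"
      using height_returns(2)[OF returns_to_U[OF x(1)]] .
    ultimately have "\<exists>x'\<in>U. (shift ^^ (j - height U x)) x' = y" by blast
    moreover have "j - height U x < j"
      using height_returns(1)[OF returns_to_U[OF x(1)]] \<open>\<not> j < height U x\<close> by linarith
    ultimately show False using not_less_Least unfolding j_def by blast
  qed
  moreover have "y \<in> tower_level U (height U x) j"
    using x unfolding tower_level_def by blast
  ultimately show ?thesis using x(1) by blast
qed

text \<open>The points of height \<open>k\<close> are cut out by finitely many conditions on \<open>(shift ^^ i) x\<close>,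
  each asking membership in a closed set (\<open>U\<close> is clopen in the closed set \<open>X\<^sub>\<tau>\<close>).\<close>
lemma height_level_eq:
  assumes "1 \<le> k"
  defines "C i \<equiv> if i < k then subshift u - U else U"
  shows "{x \<in> U. height U x = k} = U \<inter> (\<Inter>i\<in>{1..k}. {x. (shift ^^ i) x \<in> C i})"
proof (intro equalityI subsetI)
  fix x assume "x \<in> {x \<in> U. height U x = k}"
  then have x: "x \<in> U" "height U x = k" by simp_all
  have "(shift ^^ i) x \<in> C i" if i: "i \<in> {1..k}" for i
  proof (cases "i < k")
    case True
    have "(shift ^^ i) x \<in> subshift u" using x(1) U_sub shift_pow_in_subshift by blast
    then show ?thesis
      using True i x(2) shift_pow_notin_below_height[of i U x] by (simp add: C_def)
  next
    case False
    then show ?thesis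
      using i x height_returns(2)[OF returns_to_U[OF x(1)]] by (simp add: C_def)
  qed
  then show "x \<in> U \<inter> (\<Inter>i\<in>{1..k}. {x. (shift ^^ i) x \<in> C i})" using x(1) by blast
next
  fix x assume x: "x \<in> U \<inter> (\<Inter>i\<in>{1..k}. {x. (shift ^^ i) x \<in> C i})"
  then have in_C: "(shift ^^ i) x \<in> C i" if "i \<in> {1..k}" for i using that by blast
  have "(shift ^^ k) x \<in> U" using in_C[of k] assms by (simp add: C_def)
  then have "height U x \<le> k" using assms height_le by blast
  moreover have "\<not> height U x < k"
  proof
    assume lt: "height U x < k"
    have "1 \<le> height U x" "(shift ^^ height U x) x \<in> U"
      using height_returns[OF returns_to_U] x by simp_all
    then show False using in_C[of "height U x"] lt by (simp add: C_def)
  qed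
  ultimately show "x \<in> {x \<in> U. height U x = k}" using x by simp
qed

lemma closedin_tower_level:
  assumes "1 \<le> k"
  shows "closedin seq_topology (tower_level U k j)"
proof -
  let ?C = "\<lambda>i. if i < k then subshift u - U else U"
  have "closedin seq_topology (U \<inter> (\<Inter>i\<in>{1..k}. {x. (shift ^^ i) x \<in> ?C i}))"
  proof (intro closedin_Int closedin_INT closedin_shift_pow_preimage)
    show "{1..k} \<noteq> {}" using assms by simp
    show "closedin seq_topology (?C i)" for i
      using closedin_U closedin_subshift_diff_U by simp
  qed (rule closedin_U)
  then show ?thesis
    unfolding tower_level_def height_level_eq[OF assms] by (rule closedin_shift_pow_image)
qed


abbreviation tower_indices :: "(nat \<times> nat) set" where
  "tower_indices \<equiv> {(k, j). 1 \<le> k \<and> k \<le> Max (height U ` U) \<and> j < k}"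

lemma finite_tower_indices: "finite tower_indices"
  by (rule finite_subset[of _ "{..Max (height U ` U)} \<times> {..Max (height U ` U)}"]) auto

lemma tower_level_subset: "tower_level U k j \<subseteq> subshift u"
  using U_sub shift_pow_in_subshift by (auto simp: tower_level_def)

lemma tower_indices_cover:
  assumes y: "y \<in> subshift u"
  shows "\<exists>k j. (k, j) \<in> tower_indices \<and> y \<in> tower_level U k j"
proof -
  obtain x j where x: "x \<in> U" "j < height U x" "y \<in> tower_level U (height U x) j"
    using tower_levels_cover[OF y] by blast
  have "1 \<le> height U x" using height_returns(1)[OF returns_to_U[OF x(1)]] .
  moreover have "height U x \<le> Max (height U ` U)" using finite_heights x(1) by simp
  ultimately show ?thesis using x(2,3) by blast
qed

lemma UN_tower_levels: "(\<Union>k\<in>{1..Max (height U ` U)}. \<Union>j<k. tower_level U k j) = subshift u"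
proof (intro equalityI subsetI)
  fix y assume "y \<in> subshift u"
  then obtain k j where "(k, j) \<in> tower_indices" "y \<in> tower_level U k j"
    using tower_indices_cover by blast
  then show "y \<in> (\<Union>k\<in>{1..Max (height U ` U)}. \<Union>j<k. tower_level U k j)" by auto
qed (use tower_level_subset in blast)

lemma clopen_in_tower_level:
  assumes branch: "\<forall>y. branch_point (subshift u) y \<longrightarrow> y \<in> U" and kj: "(k, j) \<in> tower_indices"
  shows "clopen_in (subshift u) (tower_level U k j)"
proof -
  let ?A = "\<lambda>(k, j). tower_level U k j"
  have "openin (subtopology seq_topology (subshift u)) (?A (k, j))"
  proof (rule openin_finite_closed_partition[OF finite_tower_indices kj])
    show "subshift u \<subseteq> (\<Union>p\<in>tower_indices. ?A p)"
      using tower_indices_cover by fastforce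
    show "?A p \<inter> ?A q = {}" if "p \<in> tower_indices" "q \<in> tower_indices" "p \<noteq> q" for p q
      using that tower_levels_disjoint[OF branch U_sub shift_in_subshift] by (cases p, cases q) simp
    show "closedin seq_topology (?A p)" if "p \<in> tower_indices" for p
      using that closedin_tower_level by (cases p) simp
  qed (simp_all add: tower_level_subset)
  moreover have "closedin seq_topology (tower_level U k j)"
    using kj closedin_tower_level by simp
  ultimately show ?thesis
    using tower_level_subset by (simp add: clopen_in_def closedin_subset_topspace)
qed

end

theorem lemma14:
  fixes \<tau> :: "'a::finite \<Rightarrow> 'a list" and u :: "nat \<Rightarrow> 'a" and U :: "(nat \<Rightarrow> 'a) set"
  assumes nonerasing: "nonerasing \<tau>"
    and fixpoint: "subst_seq \<tau> u = u"
    and prim: "primitive \<tau>"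
    and inf: "infinite (subshift u)"
    and recog: "unilaterally_recognizable \<tau> (subshift u)"
    and inj_pow: "\<forall>n. inj (subst_pow \<tau> n)"
    and qi: "quasi_invertible (subshift u)"
    and U_sub: "U \<subseteq> subshift u"
    and U_clopen: "clopen_in (subshift u) U"
    and U_branch: "\<forall>y. branch_point (subshift u) y \<longrightarrow> y \<in> U"
  defines "H \<equiv> Max (height U ` U)"
  shows "(\<forall>k j. 1 \<le> k \<and> k \<le> H \<and> j < k \<longrightarrow> clopen_in (subshift u) (tower_level U k j))
       \<and> (\<Union>k\<in>{1..H}. \<Union>j<k. tower_level U k j) = subshift u
       \<and> (\<forall>k j k' j'. 1 \<le> k \<and> k \<le> H \<and> j < k \<and> 1 \<le> k' \<and> k' \<le> H \<and> j' < k'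
            \<and> (k, j) \<noteq> (k', j') \<longrightarrow> tower_level U k j \<inter> tower_level U k' j' = {})"
proof -
  txt \<open>Of quasi-invertibility only the existence of a branch point is needed (it makes \<open>U\<close>
    nonempty).\<close>
  have "U \<noteq> {}" using qi U_branch unfolding quasi_invertible_def by blast
  obtain c c' :: 'a where "c \<noteq> c'" using infinite_subshift_two_letters[OF inf] by blast
  then interpret clopen_section_of_minimal_subshift u U
    using primitive_fixpoint_uniformly_recurrent[OF nonerasing fixpoint prim] U_sub U_clopen \<open>U \<noteq> {}\<close>
    by unfold_locales
  show ?thesis
    unfolding H_def
  proof (intro conjI allI impI)
    show "clopen_in (subshift u) (tower_level U k j)" if "1 \<le> k \<and> k \<le> Max (height U ` U) \<and> j < k" for k j
      using clopen_in_tower_level[OF U_branch] that by simp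
    show "tower_level U k j \<inter> tower_level U k' j' = {}"
      if "1 \<le> k \<and> k \<le> Max (height U ` U) \<and> j < k \<and> 1 \<le> k' \<and> k' \<le> Max (height U ` U) \<and> j' < k'
        \<and> (k, j) \<noteq> (k', j')" for k j k' j'
      using tower_levels_disjoint[OF U_branch U_sub shift_in_subshift] that by simp
  qed (rule UN_tower_levels)
qed

end
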